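(* Let $n$, $k$, $t$ be positive integers with $k\geq t+1$ and $n\geq 2k$, and let $V$ be an $n$-dimensional vector space over $\mathbb{F}_q$. Suppose $\mathcal{F}\subseteq{V\brack k}$ is a maximal (with respect to inclusion) almost $t$-intersecting family with $\tau_t(\mathcal{F})\leq k$. If $\mathcal{T}$ is the set of all $t$-covers of $\mathcal{F}$ of dimension $\tau_t(\mathcal{F})$, then $\mathcal{T}$ is $t$-intersecting, i.e. $\dim(T_1\cap T_2)\geq t$ for all $T_1,T_2\in\mathcal{T}$.
   Context: $q$ is a prime power; ${W\brack k}$ is the set of $k$-dimensional subspaces of $W$. A family $\mathcal{F}\subseteq{V\brack k}$ is almost $t$-intersecting if for each $F\in\mathcal{F}$ there is at most one $F'\in\mathcal{F}$ with $\dim(F\cap F')<t$. A subspace $W$ is a $t$-cover of $\mathcal{F}$ if $\dim(W\cap F)\geq t$ for all $F\in\mathcal{F}$; $\tau_t(\mathcal{F})$ is the minimum dimension of a $t$-cover of $\mathcal{F}$. *)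

theory Defs
  imports "HOL-Analysis.Cartesian_Space"
begin

text \<open>The ambient space V is the n-dimensional space 'a^'n over a finite field 'a
  (so 'a is F_q with q a prime power), n = CARD('n).\<close>

definition gr :: "nat \<Rightarrow> ('a::field ^ 'n) set set" where
  "gr k = {W. vec.subspace W \<and> vec.dim W = k}"

definition almost_t_intersecting :: "nat \<Rightarrow> ('a::field ^ 'n) set set \<Rightarrow> bool" where
  "almost_t_intersecting t \<F> \<longleftrightarrow>
     (\<forall>F\<in>\<F>. card {F'\<in>\<F>. vec.dim (F \<inter> F') < t} \<le> 1)"

definition t_cover :: "nat \<Rightarrow> ('a::field ^ 'n) set set \<Rightarrow> ('a ^ 'n) set \<Rightarrow> bool" where
  "t_cover t \<F> W \<longleftrightarrow> vec.subspace W \<and> (\<forall>F\<in>\<F>. vec.dim (W \<inter> F) \<ge> t)"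

definition tau :: "nat \<Rightarrow> ('a::field ^ 'n) set set \<Rightarrow> nat" where
  "tau t \<F> = (LEAST d. \<exists>W. t_cover t \<F> W \<and> vec.dim W = d)"

definition maximal_almost_t_intersecting :: "nat \<Rightarrow> nat \<Rightarrow> ('a::field ^ 'n) set set \<Rightarrow> bool" where
  "maximal_almost_t_intersecting k t \<F> \<longleftrightarrow>
     \<F> \<subseteq> gr k \<and> almost_t_intersecting t \<F> \<and>
     (\<forall>\<G>. \<F> \<subset> \<G> \<and> \<G> \<subseteq> gr k \<longrightarrow> \<not> almost_t_intersecting t \<G>)"

end

theory Submission
  imports Defs
begin

text \<open>Suppose two minimal t-covers T1, T2 meet in dimension less than t. Extend T2 to a
  k-space G with G \<inter> (T1 + T2) = T2; this needs dim (T1 + T2) + (k - \<tau>) \<le> 2k \<le> n.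
  Adding a k-space that contains a t-cover keeps a family almost t-intersecting, so by
  maximality G \<in> \<F>. As T1 is a t-cover, dim (T1 \<inter> G) \<ge> t, yet T1 \<inter> G \<subseteq> T1 \<inter> T2.\<close>

context vector_space
begin

lemma span_Int_subsets_of_independent:
  assumes "independent U" "A \<subseteq> U" "B \<subseteq> U"
  shows "span A \<inter> span B = span (A \<inter> B)"
proof
  show "span (A \<inter> B) \<subseteq> span A \<inter> span B"
    by (simp add: span_mono)
next
  show "span A \<inter> span B \<subseteq> span (A \<inter> B)"
  proof
    fix x assume x: "x \<in> span A \<inter> span B"
    let ?R = "representation U x"
    have RA: "?R = representation A x" and RB: "?R = representation B x"
      using representation_extend assms x by blast+
    have indA: "independent A"
      using assms independent_mono by blast
    have supp: "b \<in> A \<inter> B" if "?R b \<noteq> 0" for b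
      using that RA RB representation_ne_zero[of A x b] representation_ne_zero[of B x b] by auto
    have "x = (\<Sum>b | representation A x b \<noteq> 0. representation A x b *s b)"
      using sum_nonzero_representation_eq[OF indA] x by simp
    also have "\<dots> \<in> span (A \<inter> B)"
      by (intro span_sum span_scale span_base) (use supp RA in auto)
    finally show "x \<in> span (A \<inter> B)" .
  qed
qed

end

context finite_dimensional_vector_space
begin

lemma obtain_superspace_meeting_in:
  assumes "subspace T" "subspace S" "T \<subseteq> S" "dim T \<le> k"
    and "dim S + (k - dim T) \<le> dim UNIV"
  obtains G where "subspace G" "dim G = k" "T \<subseteq> G" "G \<inter> S = T"
proof -
  obtain BT where BT: "BT \<subseteq> T" "independent BT" "span BT = T" "card BT = dim T"
    using basis_subspace_exists[OF \<open>subspace T\<close>] by metis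
  have "BT \<subseteq> S"
    using BT(1) \<open>T \<subseteq> S\<close> by blast
  then obtain BS where BS: "BT \<subseteq> BS" "BS \<subseteq> S" "independent BS" "S \<subseteq> span BS"
    by (rule maximal_independent_subset_extend[OF _ BT(2)])
  obtain BU where BU: "BS \<subseteq> BU" "independent BU" "UNIV \<subseteq> span BU"
    by (rule maximal_independent_subset_extend[OF subset_UNIV BS(3)])
  have "finite BU"
    using BU(2) finiteI_independent by blast
  have "card BS = dim S"
    using basis_card_eq_dim BS by blast
  moreover have "card BU = dim UNIV"
    using basis_card_eq_dim[OF subset_UNIV BU(3,2)] .
  ultimately have "k - dim T \<le> card (BU - BS)"
    using assms(5) BU(1) \<open>finite BU\<close> by (simp add: card_Diff_subset finite_subset)
  then obtain D where D: "D \<subseteq> BU - BS" "card D = k - dim T" "finite D"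
    by (rule obtain_subset_with_card_n)
  have "BT \<union> D \<subseteq> BU"
    using D(1) BS(1) BU(1) by blast
  then have ind: "independent (BT \<union> D)"
    using BU(2) independent_mono by blast
  have "BT \<inter> D = {}"
    using D(1) BS(1) by blast
  then have "card (BT \<union> D) = card BT + card D"
    using D(3) BT(2) finiteI_independent card_Un_disjoint by blast
  then have dim_G: "dim (span (BT \<union> D)) = k"
    using dim_span_eq_card_independent[OF ind] BT(4) D(2) assms(4) by simp
  have "span (BT \<union> D) \<inter> S = span (BT \<union> D) \<inter> span BS"
    using span_subspace[OF BS(2,4) \<open>subspace S\<close>] by simp
  also have "\<dots> = span ((BT \<union> D) \<inter> BS)"
    using span_Int_subsets_of_independent[OF BU(2) \<open>BT \<union> D \<subseteq> BU\<close> BU(1)] .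
  also have "(BT \<union> D) \<inter> BS = BT"
    using D(1) BS(1) by blast
  finally have meet: "span (BT \<union> D) \<inter> S = T"
    using BT(3) by simp
  have "T \<subseteq> span (BT \<union> D)"
    using BT(3) span_mono[of BT "BT \<union> D"] by blast
  with dim_G meet show thesis
    using that[OF subspace_span] by blast
qed

end

lemma t_cover_superspace:
  assumes "t_cover t \<F> T" "T \<subseteq> G" "vec.subspace G"
  shows "t_cover t \<F> G"
  using assms vec.dim_subset[of "T \<inter> _" "G \<inter> _"] unfolding t_cover_def
  by (meson Int_mono order.trans order_refl)

lemma almost_t_intersecting_insert_t_cover:
  assumes "almost_t_intersecting t \<F>" "t_cover t \<F> G" "t \<le> vec.dim G"
  shows "almost_t_intersecting t (insert G \<F>)"
  unfolding almost_t_intersecting_def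
proof
  fix F assume F: "F \<in> insert G \<F>"
  have meets_G: "t \<le> vec.dim (G \<inter> F')" if "F' \<in> insert G \<F>" for F'
    using that assms(2,3) unfolding t_cover_def by auto
  show "card {F' \<in> insert G \<F>. vec.dim (F \<inter> F') < t} \<le> 1"
  proof (cases "F = G")
    case True
    then have empty: "{F' \<in> insert G \<F>. vec.dim (F \<inter> F') < t} = {}"
      using meets_G by (auto simp: not_less)
    show ?thesis
      unfolding empty by simp
  next
    case False
    with F have "F \<in> \<F>" by simp
    moreover have "t \<le> vec.dim (F \<inter> G)"
      using meets_G[of F] F by (simp add: Int_commute)
    then have "{F' \<in> insert G \<F>. vec.dim (F \<inter> F') < t} = {F' \<in> \<F>. vec.dim (F \<inter> F') < t}"
      by auto
    ultimately show ?thesis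
      using assms(1) unfolding almost_t_intersecting_def by simp
  qed
qed

lemma superspace_of_t_cover_mem_maximal:
  assumes max: "maximal_almost_t_intersecting k t \<F>"
    and "t_cover t \<F> T" "t \<le> k" "G \<in> gr k" "T \<subseteq> G"
  shows "G \<in> \<F>"
proof (rule ccontr)
  assume "G \<notin> \<F>"
  have "t_cover t \<F> G"
    using t_cover_superspace assms unfolding gr_def by blast
  moreover have "almost_t_intersecting t \<F>" "t \<le> vec.dim G"
    using max assms(3,4) unfolding maximal_almost_t_intersecting_def gr_def by auto
  ultimately have "almost_t_intersecting t (insert G \<F>)"
    by (simp add: almost_t_intersecting_insert_t_cover)
  moreover have "\<F> \<subset> insert G \<F>" "insert G \<F> \<subseteq> gr k"
    using \<open>G \<notin> \<F>\<close> max assms(4) unfolding maximal_almost_t_intersecting_def by auto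
  ultimately show False
    using max unfolding maximal_almost_t_intersecting_def by blast
qed

theorem lemma5p2:
  fixes \<F> :: "('a::{field,finite} ^ 'n) set set"
    and n k t :: nat
  assumes "n = CARD('n)"
    and "0 < t" and "0 < k" and "k \<ge> t + 1" and "n \<ge> 2 * k"
    and "maximal_almost_t_intersecting k t \<F>"
    and "tau t \<F> \<le> k"
  shows "\<forall>T1 \<in> {T. t_cover t \<F> T \<and> vec.dim T = tau t \<F>}.
         \<forall>T2 \<in> {T. t_cover t \<F> T \<and> vec.dim T = tau t \<F>}.
           vec.dim (T1 \<inter> T2) \<ge> t"
proof (intro ballI, rule ccontr)
  fix T1 T2
  assume "T1 \<in> {T. t_cover t \<F> T \<and> vec.dim T = tau t \<F>}"
    and "T2 \<in> {T. t_cover t \<F> T \<and> vec.dim T = tau t \<F>}"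
    and small: "\<not> t \<le> vec.dim (T1 \<inter> T2)"
  then have cover: "t_cover t \<F> T1" "t_cover t \<F> T2"
    and dim_T: "vec.dim T1 = tau t \<F>" "vec.dim T2 = tau t \<F>"
    by auto
  then have sub: "vec.subspace T1" "vec.subspace T2"
    unfolding t_cover_def by auto
  define S where "S = {x + y | x y. x \<in> T1 \<and> y \<in> T2}"
  have "vec.subspace S"
    unfolding S_def by (rule vec.subspace_sums[OF sub])
  have "T1 \<subseteq> S" "T2 \<subseteq> S"
    unfolding S_def using vec.subspace_0[OF sub(1)] vec.subspace_0[OF sub(2)] by force+
  have "vec.dim S + vec.dim (T1 \<inter> T2) = vec.dim T1 + vec.dim T2"
    unfolding S_def by (rule vec.dim_sums_Int[OF sub])
  then have "vec.dim S + (k - vec.dim T2) \<le> vec.dim (UNIV :: ('a ^ 'n) set)"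
    using dim_T assms(1,5,7) unfolding vec_dim_card by linarith
  then obtain G where "vec.subspace G" "vec.dim G = k" "T2 \<subseteq> G" "G \<inter> S = T2"
    using vec.obtain_superspace_meeting_in[OF sub(2) \<open>vec.subspace S\<close> \<open>T2 \<subseteq> S\<close>]
      dim_T(2) assms(7) by metis
  then have "G \<in> \<F>"
    using superspace_of_t_cover_mem_maximal[OF assms(6) cover(2)] assms(4)
    unfolding gr_def by simp
  then have "t \<le> vec.dim (T1 \<inter> G)"
    using cover(1) unfolding t_cover_def by simp
  moreover have "vec.dim (T1 \<inter> G) \<le> vec.dim (T1 \<inter> T2)"
    using \<open>G \<inter> S = T2\<close> \<open>T1 \<subseteq> S\<close> by (intro vec.dim_subset) blast
  ultimately show False
    using small by linarith
qed

end
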